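(* Let $\pi_n$ be a posterior density on $\Theta$, $f^*_{\hat\theta}$ a probability density symmetric about $\hat\theta\in\Theta$, $q^*_{\hat\theta}=2f^*_{\hat\theta}w^*_{\hat\theta}$, and let $q_{\hat\theta}(\theta)=2f^*_{\hat\theta}(\theta)w_{\hat\theta}(\theta)$ where $w_{\hat\theta}:\Theta\to[0,1]$ is any (measurable) function with $w_{\hat\theta}(\theta)=1-w_{\hat\theta}(2\hat\theta-\theta)$ for all $\theta$. Then for every such $w_{\hat\theta}$, every $\hat\theta\in\Theta$ and every sample size $n$, $$\mathcal{D}[\pi_n\,\|\,q^*_{\hat\theta}]\le\mathcal{D}[\pi_n\,\|\,q_{\hat\theta}],$$ where $\mathcal{D}$ is $\mathcal{D}_{TV}$ or any $\alpha$-divergence $\mathcal{D}_\alpha$, $\alpha\in\mathbb{R}\setminus\{0,1\}$ (including the limiting Kullback–Leibler cases $\alpha\to0,1$).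
   Context: Posterior $\pi_n(\theta)=\pi(\theta)L(\theta;y_{1:n})/c(y_{1:n})$ on $\Theta\subseteq\mathbb{R}^d$, $\Theta$ symmetric about $\hat\theta$. Symmetric about $\hat\theta$ means $f(\theta)=f(2\hat\theta-\theta)$. Skewness-inducing factor: $w^*_{\hat\theta}(\theta)=\frac{\pi(\theta)L(\theta;y_{1:n})}{\pi(\theta)L(\theta;y_{1:n})+\pi(2\hat\theta-\theta)L(2\hat\theta-\theta;y_{1:n})}$, set to $1/2$ when numerator and denominator both vanish. $\mathcal{D}_{TV}[p\|q]=\tfrac12\int|p-q|$; $\mathcal{D}_\alpha[p\|q]=\frac{1}{\alpha(1-\alpha)}(1-\int p^\alpha q^{1-\alpha})$; limits $\alpha\to1$: $\mathrm{KL}[p\|q]$, $\alpha\to0$: $\mathrm{KL}[q\|p]$. *)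

theory Defs
  imports "HOL-Analysis.Analysis"
begin

definition refl_pt :: "'a::real_vector \<Rightarrow> 'a \<Rightarrow> 'a" where
  "refl_pt th t = 2 *\<^sub>R th - t"

definition sym_about :: "'a::real_vector \<Rightarrow> 'a set \<Rightarrow> bool" where
  "sym_about th S \<longleftrightarrow> (\<forall>t\<in>S. refl_pt th t \<in> S)"

definition post_norm :: "('a::euclidean_space \<Rightarrow> real) \<Rightarrow> ('a \<Rightarrow> real) \<Rightarrow> 'a set \<Rightarrow> real" where
  "post_norm prior lik S = enn2real (\<integral>\<^sup>+ t. ennreal (prior t * lik t) * indicator S t \<partial>lborel)"

definition posterior :: "('a::euclidean_space \<Rightarrow> real) \<Rightarrow> ('a \<Rightarrow> real) \<Rightarrow> 'a set \<Rightarrow> 'a \<Rightarrow> real" where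
  "posterior prior lik S t = prior t * lik t / post_norm prior lik S"

text \<open>Skewness-inducing factor w*, set to 1/2 when numerator and denominator both vanish.\<close>
definition skew_factor :: "('a::real_vector \<Rightarrow> real) \<Rightarrow> ('a \<Rightarrow> real) \<Rightarrow> 'a \<Rightarrow> 'a \<Rightarrow> real" where
  "skew_factor prior lik th t =
     (let a = prior t * lik t; b = prior (refl_pt th t) * lik (refl_pt th t)
      in if a = 0 \<and> a + b = 0 then 1/2 else a / (a + b))"

definition skew_density :: "('a \<Rightarrow> real) \<Rightarrow> ('a \<Rightarrow> real) \<Rightarrow> 'a \<Rightarrow> real" where
  "skew_density f w t = 2 * f t * w t"

definition TV_div :: "'a::euclidean_space set \<Rightarrow> ('a \<Rightarrow> real) \<Rightarrow> ('a \<Rightarrow> real) \<Rightarrow> ennreal" where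
  "TV_div S p q = ennreal (1/2) * (\<integral>\<^sup>+ t. ennreal \<bar>p t - q t\<bar> * indicator S t \<partial>lborel)"

definition pow_e :: "real \<Rightarrow> real \<Rightarrow> ennreal" where
  "pow_e x a = (if x > 0 then ennreal (x powr a) else if a > 0 then 0 else if a = 0 then 1 else \<infinity>)"

definition alpha_div :: "real \<Rightarrow> 'a::euclidean_space set \<Rightarrow> ('a \<Rightarrow> real) \<Rightarrow> ('a \<Rightarrow> real) \<Rightarrow> ereal" where
  "alpha_div \<alpha> S p q = ereal (1 / (\<alpha> * (1 - \<alpha>))) *
     (1 - enn2ereal (\<integral>\<^sup>+ t. pow_e (p t) \<alpha> * pow_e (q t) (1 - \<alpha>) * indicator S t \<partial>lborel))"

text \<open>Kullback-Leibler divergence int p log(p/q), as positive part minus negative part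
  of the integrand (0 log(0/q) = 0, p log(p/0) = infinity for p > 0).\<close>
definition kl_pos :: "real \<Rightarrow> real \<Rightarrow> ennreal" where
  "kl_pos x y = (if x \<le> 0 then 0 else if y \<le> 0 then \<infinity> else ennreal (x * ln (x / y)))"

definition kl_neg :: "real \<Rightarrow> real \<Rightarrow> ennreal" where
  "kl_neg x y = (if x \<le> 0 \<or> y \<le> 0 then 0 else ennreal (- (x * ln (x / y))))"

definition KL_div :: "'a::euclidean_space set \<Rightarrow> ('a \<Rightarrow> real) \<Rightarrow> ('a \<Rightarrow> real) \<Rightarrow> ereal" where
  "KL_div S p q = enn2ereal (\<integral>\<^sup>+ t. kl_pos (p t) (q t) * indicator S t \<partial>lborel)
                 - enn2ereal (\<integral>\<^sup>+ t. kl_neg (p t) (q t) * indicator S t \<partial>lborel)"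

end

theory Submission
  imports Defs
begin

(* The reflection t \<mapsto> 2 th - t preserves Lebesgue measure, so every divergence integral can be
   evaluated over pairs {t, 2 th - t}. On such a pair the skewed density puts the masses c w and
   c (1 - w), with c = 2 f t, against the posterior masses a and b. Each integrand F of the
   divergences (|x - y|, x^\<alpha> y^(1-\<alpha>) and x ln(x/y) - x + y) is positively homogeneous and jointly
   subadditive -- superadditive for 0 < \<alpha> < 1, where the prefactor of the \<alpha>-divergence is positive
   instead of negative -- so F a (c w) + F b (c (1 - w)) \<ge> F (a + b) c, with equality for the
   proportional split w = a / (a + b), which is w*. Integrating the pairwise inequality proves the
   theorem; for KL the integrand x ln(x/y) may be replaced by x ln(x/y) - x + y because both
   densities have mass 1. *)

lemma refl_pt_refl_pt [simp]: "refl_pt th (refl_pt th t) = t"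
  by (simp add: refl_pt_def)

lemma measurable_refl_pt [measurable]: "refl_pt (th::'a::euclidean_space) \<in> borel_measurable borel"
  unfolding refl_pt_def[abs_def] by simp

lemma indicator_refl_pt:
  assumes "sym_about th S"
  shows "indicator S (refl_pt th t) = indicator S t"
  using assms unfolding sym_about_def by (metis indicator_simps refl_pt_refl_pt)

lemma nn_integral_refl_pt:
  fixes H :: "'a::euclidean_space \<Rightarrow> ennreal"
  assumes [measurable]: "H \<in> borel_measurable borel"
  shows "(\<integral>\<^sup>+t. H (refl_pt th t) \<partial>lborel) = (\<integral>\<^sup>+t. H t \<partial>lborel)"
proof -
  have "lborel = density (distr lborel borel (\<lambda>x. 2 *\<^sub>R th + (-1) *\<^sub>R x)) (\<lambda>_. \<bar>-1::real\<bar> ^ DIM('a))"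
    by (rule lborel_affine) simp
  then have "lborel = distr lborel borel (refl_pt th)"
    by (simp add: refl_pt_def[abs_def] density_1)
  then have "(\<integral>\<^sup>+t. H t \<partial>lborel) = (\<integral>\<^sup>+t. H t \<partial>distr lborel borel (refl_pt th))"
    by simp
  also have "\<dots> = (\<integral>\<^sup>+t. H (refl_pt th t) \<partial>lborel)"
    by (subst nn_integral_distr) auto
  finally show ?thesis ..
qed

lemma nn_integral_add_refl_pt:
  fixes H :: "'a::euclidean_space \<Rightarrow> ennreal"
  assumes [measurable]: "H \<in> borel_measurable borel"
  shows "(\<integral>\<^sup>+t. H t + H (refl_pt th t) \<partial>lborel) = 2 * (\<integral>\<^sup>+t. H t \<partial>lborel)"
  by (simp add: nn_integral_add nn_integral_refl_pt mult_2)

lemma nn_integral_mono_refl_pt_pairs: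
  fixes H1 H2 :: "'a::euclidean_space \<Rightarrow> ennreal"
  assumes [measurable]: "H1 \<in> borel_measurable borel" "H2 \<in> borel_measurable borel"
    and pairs: "\<And>t. H1 t + H1 (refl_pt th t) \<le> H2 t + H2 (refl_pt th t)"
  shows "(\<integral>\<^sup>+t. H1 t \<partial>lborel) \<le> (\<integral>\<^sup>+t. H2 t \<partial>lborel)"
proof -
  have "2 * (\<integral>\<^sup>+t. H1 t \<partial>lborel) = (\<integral>\<^sup>+t. H1 t + H1 (refl_pt th t) \<partial>lborel)"
    by (rule nn_integral_add_refl_pt[symmetric]) measurable
  also have "\<dots> \<le> (\<integral>\<^sup>+t. H2 t + H2 (refl_pt th t) \<partial>lborel)"
    by (intro nn_integral_mono pairs)
  also have "\<dots> = 2 * (\<integral>\<^sup>+t. H2 t \<partial>lborel)"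
    by (rule nn_integral_add_refl_pt) measurable
  finally show ?thesis
    by (subst (asm) ennreal_mult_le_mult_iff) auto
qed

definition split_ratio :: "real \<Rightarrow> real \<Rightarrow> real" where
  "split_ratio a b = (if a = 0 \<and> a + b = 0 then 1/2 else a / (a + b))"

lemma skew_factor_split_ratio:
  "skew_factor prior lik th t = split_ratio (prior t * lik t) (prior (refl_pt th t) * lik (refl_pt th t))"
  by (simp add: skew_factor_def split_ratio_def Let_def)

lemma split_ratio_divide:
  assumes "N \<noteq> 0"
  shows "split_ratio (a / N) (b / N) = split_ratio a b"
  using assms by (simp add: split_ratio_def add_divide_distrib[symmetric])

lemma split_ratio_pos:
  assumes "0 < a + b"
  shows "split_ratio a b = a / (a + b)" "1 - split_ratio a b = b / (a + b)"
  using assms by (auto simp: split_ratio_def field_simps)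

lemma split_ratio_bounds:
  assumes "0 \<le> a" "0 \<le> b"
  shows "0 \<le> split_ratio a b" "split_ratio a b \<le> 1"
  using assms by (auto simp: split_ratio_def)

lemma split_ratio_swap:
  assumes "0 \<le> a" "0 \<le> b"
  shows "split_ratio b a = 1 - split_ratio a b"
  using assms by (cases "a + b = 0") (auto simp: split_ratio_def field_simps)

definition pos_homogeneous :: "(real \<Rightarrow> real \<Rightarrow> ennreal) \<Rightarrow> bool" where
  "pos_homogeneous F \<longleftrightarrow> (\<forall>l>0. \<forall>x\<ge>0. \<forall>y\<ge>0. F (l * x) (l * y) = ennreal l * F x y)"

definition jointly_subadditive :: "(real \<Rightarrow> real \<Rightarrow> ennreal) \<Rightarrow> bool" where
  "jointly_subadditive F \<longleftrightarrow> (\<forall>x1\<ge>0. \<forall>x2\<ge>0. \<forall>y1\<ge>0. \<forall>y2\<ge>0.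
     F (x1 + x2) (y1 + y2) \<le> F x1 y1 + F x2 y2)"

definition jointly_superadditive :: "(real \<Rightarrow> real \<Rightarrow> ennreal) \<Rightarrow> bool" where
  "jointly_superadditive F \<longleftrightarrow> (\<forall>x1\<ge>0. \<forall>x2\<ge>0. \<forall>y1\<ge>0. \<forall>y2\<ge>0.
     F x1 y1 + F x2 y2 \<le> F (x1 + x2) (y1 + y2))"

lemma pos_homogeneous_swap: "pos_homogeneous F \<Longrightarrow> pos_homogeneous (\<lambda>x y. F y x)"
  by (simp add: pos_homogeneous_def)

lemma jointly_subadditive_swap: "jointly_subadditive F \<Longrightarrow> jointly_subadditive (\<lambda>x y. F y x)"
  by (simp add: jointly_subadditive_def)

lemma pos_homogeneous_split_ratio:
  assumes hom: "pos_homogeneous F" and F00: "F 0 0 = 0" and "0 \<le> a" "0 \<le> b" "0 \<le> c"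
  shows "F a (c * split_ratio a b) + F b (c * (1 - split_ratio a b)) = F (a + b) c"
proof (cases "a + b = 0")
  case True
  then have "a = 0" "b = 0" using assms by auto
  moreover have "F 0 c = 2 * F 0 (c / 2)"
    using hom[unfolded pos_homogeneous_def, rule_format, of 2 0 "c / 2"] \<open>0 \<le> c\<close> by simp
  ultimately show ?thesis by (simp add: split_ratio_def mult_2)
next
  case False
  define s where "s = a + b"
  have s: "0 < s" using False assms by (simp add: s_def)
  have part: "F x (c * (x / s)) = ennreal (x / s) * F s c" if "0 \<le> x" for x
  proof (cases "x = 0")
    case True then show ?thesis using F00 by simp
  next
    case False
    then show ?thesis
      using hom[unfolded pos_homogeneous_def, rule_format, of "x / s" s c] s that \<open>0 \<le> c\<close>
      by (simp add: ac_simps)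
  qed
  have "split_ratio a b = a / s" "1 - split_ratio a b = b / s"
    using split_ratio_pos[of a b] s by (simp_all add: s_def)
  then have "F a (c * split_ratio a b) + F b (c * (1 - split_ratio a b))
      = ennreal (a / s) * F s c + ennreal (b / s) * F s c"
    by (simp only: part[OF \<open>0 \<le> a\<close>] part[OF \<open>0 \<le> b\<close>])
  also have "\<dots> = ennreal (a / s + b / s) * F s c"
    using s assms by (simp add: distrib_right ennreal_plus)
  also have "a / s + b / s = 1"
    using s by (simp add: s_def add_divide_distrib[symmetric])
  finally show ?thesis by (simp add: s_def)
qed

lemma split_ratio_minimizes:
  assumes "pos_homogeneous F" "F 0 0 = 0" "jointly_subadditive F"
    and "0 \<le> a" "0 \<le> b" "0 \<le> c" "0 \<le> w" "w \<le> 1"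
  shows "F a (c * split_ratio a b) + F b (c * (1 - split_ratio a b)) \<le> F a (c * w) + F b (c * (1 - w))"
proof -
  have "F a (c * split_ratio a b) + F b (c * (1 - split_ratio a b)) = F (a + b) (c * w + c * (1 - w))"
    using pos_homogeneous_split_ratio[OF assms(1,2,4-6)] by (simp add: algebra_simps)
  also have "\<dots> \<le> F a (c * w) + F b (c * (1 - w))"
    using assms(3-) unfolding jointly_subadditive_def by simp
  finally show ?thesis .
qed

lemma split_ratio_maximizes:
  assumes "pos_homogeneous F" "F 0 0 = 0" "jointly_superadditive F"
    and "0 \<le> a" "0 \<le> b" "0 \<le> c" "0 \<le> w" "w \<le> 1"
  shows "F a (c * w) + F b (c * (1 - w)) \<le> F a (c * split_ratio a b) + F b (c * (1 - split_ratio a b))"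
proof -
  have "F a (c * w) + F b (c * (1 - w)) \<le> F (a + b) (c * w + c * (1 - w))"
    using assms(3-) unfolding jointly_superadditive_def by simp
  also have "\<dots> = F a (c * split_ratio a b) + F b (c * (1 - split_ratio a b))"
    using pos_homogeneous_split_ratio[OF assms(1,2,4-6)] by (simp add: algebra_simps)
  finally show ?thesis .
qed

lemma convex_on_perspective_add:
  fixes g :: "real \<Rightarrow> real"
  assumes g: "convex_on {0<..} g" and "0 < x1" "0 < x2" "0 < y1" "0 < y2"
  shows "(y1 + y2) * g ((x1 + x2) / (y1 + y2)) \<le> y1 * g (x1 / y1) + y2 * g (x2 / y2)"
proof -
  define s where "s = y1 + y2"
  have s: "0 < s" using assms by (simp add: s_def)
  have weight: "1 - y2 / s = y1 / s"
    using s by (simp add: s_def field_simps)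
  have "y2 \<le> s" using assms by (simp add: s_def)
  then have "g ((y1 / s) * (x1 / y1) + (y2 / s) * (x2 / y2)) \<le> (y1 / s) * g (x1 / y1) + (y2 / s) * g (x2 / y2)"
    using convex_onD[OF g, of "y2 / s" "x1 / y1" "x2 / y2"] assms s by (simp add: weight)
  moreover have "(y1 / s) * (x1 / y1) + (y2 / s) * (x2 / y2) = (x1 + x2) / s"
    using assms by (simp add: add_divide_distrib)
  ultimately have "s * g ((x1 + x2) / s) \<le> s * ((y1 / s) * g (x1 / y1) + (y2 / s) * g (x2 / y2))"
    using s by (intro mult_left_mono) auto
  also have "\<dots> = y1 * g (x1 / y1) + y2 * g (x2 / y2)"
    using s by (simp add: distrib_left)
  finally show ?thesis by (simp add: s_def)
qed

lemma concave_on_perspective_add: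
  fixes g :: "real \<Rightarrow> real"
  assumes "concave_on {0<..} g" and "0 < x1" "0 < x2" "0 < y1" "0 < y2"
  shows "y1 * g (x1 / y1) + y2 * g (x2 / y2) \<le> (y1 + y2) * g ((x1 + x2) / (y1 + y2))"
proof -
  have "convex_on {0<..} (\<lambda>z. - g z)"
    using assms(1) by (simp add: concave_on_def)
  from convex_on_perspective_add[OF this assms(2-)] show ?thesis
    by simp
qed

lemma convex_on_mult_ln: "convex_on {0<..} (\<lambda>z::real. z * ln z)"
  by (rule f''_ge0_imp_convex[where f' = "\<lambda>z. ln z + 1" and f'' = "\<lambda>z. 1 / z"])
     (auto intro!: derivative_eq_intros)

lemma powr_concave:
  assumes "0 \<le> p" "p \<le> 1"
  shows "concave_on {0<..} (\<lambda>x::real. x powr p)"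
proof (rule f''_le0_imp_concave[where f' = "\<lambda>x. p * x powr (p - 1)"
                                  and f'' = "\<lambda>x. p * ((p - 1) * x powr (p - 1 - 1))"])
  fix x :: real assume "x \<in> {0<..}"
  then show "((\<lambda>x. x powr p) has_real_derivative p * x powr (p - 1)) (at x)"
    and "((\<lambda>x. p * x powr (p - 1)) has_real_derivative p * ((p - 1) * x powr (p - 1 - 1))) (at x)"
    by (intro DERIV_cmult has_real_derivative_powr; simp)+
  show "p * ((p - 1) * x powr (p - 1 - 1)) \<le> 0"
    using assms by (intro mult_nonneg_nonpos mult_nonpos_nonneg) auto
qed simp

lemma log_sum_inequality:
  fixes x1 x2 y1 y2 :: real
  assumes "0 < x1" "0 < x2" "0 < y1" "0 < y2"
  shows "(x1 + x2) * ln ((x1 + x2) / (y1 + y2)) \<le> x1 * ln (x1 / y1) + x2 * ln (x2 / y2)"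
proof -
  have "y * (x / y * ln (x / y)) = x * ln (x / y)" if "0 < y" for x y :: real
    using that by simp
  then show ?thesis
    using convex_on_perspective_add[OF convex_on_mult_ln assms] assms by simp
qed

lemma powr_mult_powr_one_minus:
  fixes x y a :: real
  assumes "0 \<le> x" "0 < y"
  shows "x powr a * y powr (1 - a) = y * (x / y) powr a"
  using assms by (simp add: powr_divide powr_diff)

lemma powr_mult_powr_subadditive:
  fixes x1 x2 y1 y2 a :: real
  assumes "0 \<le> x1" "0 \<le> x2" "0 < y1" "0 < y2" "1 \<le> a"
  shows "(x1 + x2) powr a * (y1 + y2) powr (1 - a) \<le> x1 powr a * y1 powr (1 - a) + x2 powr a * y2 powr (1 - a)"
proof -
  have mono: "x powr a * (y1 + y2) powr (1 - a) \<le> x powr a * y powr (1 - a)"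
    if "0 < y" "y \<le> y1 + y2" for x y
    using that assms by (intro mult_left_mono powr_mono2') auto
  consider "x1 = 0" | "x2 = 0" | "0 < x1" "0 < x2" using assms by fastforce
  then show ?thesis
  proof cases
    case 1 then show ?thesis using mono[of y2 x2] assms by simp
  next
    case 2 then show ?thesis using mono[of y1 x1] assms by simp
  next
    case 3
    then show ?thesis
      using convex_on_perspective_add[OF powr_convex[OF assms(5)] 3 assms(3,4)] assms
      by (simp add: powr_mult_powr_one_minus)
  qed
qed

lemma powr_mult_powr_superadditive:
  fixes x1 x2 y1 y2 a :: real
  assumes "0 \<le> x1" "0 \<le> x2" "0 \<le> y1" "0 \<le> y2" "0 < a" "a < 1"
  shows "x1 powr a * y1 powr (1 - a) + x2 powr a * y2 powr (1 - a) \<le> (x1 + x2) powr a * (y1 + y2) powr (1 - a)"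
proof -
  have mono: "x powr a * y powr (1 - a) \<le> (x1 + x2) powr a * (y1 + y2) powr (1 - a)"
    if "0 \<le> x" "x \<le> x1 + x2" "0 \<le> y" "y \<le> y1 + y2" for x y
    using that assms by (intro mult_mono powr_mono2) auto
  consider "x1 = 0 \<or> y1 = 0" | "x2 = 0 \<or> y2 = 0" | "0 < x1" "0 < x2" "0 < y1" "0 < y2"
    using assms by fastforce
  then show ?thesis
  proof cases
    case 1 then show ?thesis using mono[of x2 y2] assms by auto
  next
    case 2 then show ?thesis using mono[of x1 y1] assms by auto
  next
    case 3
    then show ?thesis
      using concave_on_perspective_add[OF powr_concave 3, of a] assms
      by (simp add: powr_mult_powr_one_minus)
  qed
qed

lemma pos_homogeneous_abs_diff: "pos_homogeneous (\<lambda>x y. ennreal \<bar>x - y\<bar>)"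
  unfolding pos_homogeneous_def by (auto simp: right_diff_distrib[symmetric] abs_mult ennreal_mult)

lemma jointly_subadditive_abs_diff: "jointly_subadditive (\<lambda>x y. ennreal \<bar>x - y\<bar>)"
  unfolding jointly_subadditive_def
  by (auto simp: ennreal_plus[symmetric] simp del: ennreal_plus intro!: ennreal_leI)

lemma ennreal_le_add:
  assumes "x \<le> a + b" "0 \<le> a" "0 \<le> b"
  shows "ennreal x \<le> ennreal a + ennreal b"
  using assms by (simp add: ennreal_plus[symmetric] ennreal_leI del: ennreal_plus)

definition alpha_kernel :: "real \<Rightarrow> real \<Rightarrow> real \<Rightarrow> ennreal" where
  "alpha_kernel \<alpha> x y = pow_e x \<alpha> * pow_e y (1 - \<alpha>)"

lemma pow_e_mult:
  assumes "0 < l"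
  shows "pow_e (l * x) a = ennreal (l powr a) * pow_e x a"
  using assms by (auto simp: pow_e_def powr_mult ennreal_mult zero_less_mult_iff)

lemma pos_homogeneous_alpha_kernel: "pos_homogeneous (alpha_kernel \<alpha>)"
  unfolding pos_homogeneous_def
proof (intro allI impI)
  fix l x y :: real assume "0 < l"
  then have "ennreal (l powr \<alpha>) * ennreal (l powr (1 - \<alpha>)) = ennreal l"
    by (simp add: ennreal_mult[symmetric] powr_add[symmetric])
  then show "alpha_kernel \<alpha> (l * x) (l * y) = ennreal l * alpha_kernel \<alpha> x y"
    using \<open>0 < l\<close> by (simp add: alpha_kernel_def pow_e_mult ac_simps)
qed

lemma alpha_kernel_0_0 [simp]: "alpha_kernel \<alpha> 0 0 = 0"
  by (simp add: alpha_kernel_def pow_e_def)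

lemma alpha_kernel_swap: "alpha_kernel \<alpha> x y = alpha_kernel (1 - \<alpha>) y x"
  by (simp add: alpha_kernel_def mult.commute)

lemma alpha_kernel_pos_right:
  assumes "0 < \<alpha>" "0 \<le> x" "0 < y"
  shows "alpha_kernel \<alpha> x y = ennreal (x powr \<alpha> * y powr (1 - \<alpha>))"
  using assms by (cases "x = 0") (auto simp: alpha_kernel_def pow_e_def ennreal_mult)

lemma alpha_kernel_0_right:
  assumes "0 < \<alpha>" "\<alpha> \<noteq> 1" "0 \<le> x"
  shows "alpha_kernel \<alpha> x 0 = (if 1 < \<alpha> \<and> 0 < x then \<infinity> else 0)"
  using assms by (auto simp: alpha_kernel_def pow_e_def)

lemma jointly_superadditive_alpha_kernel:
  assumes "0 < \<alpha>" "\<alpha> < 1"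
  shows "jointly_superadditive (alpha_kernel \<alpha>)"
proof -
  have "alpha_kernel \<alpha> x y = ennreal (x powr \<alpha> * y powr (1 - \<alpha>))" if "0 \<le> x" "0 \<le> y" for x y
    using that assms alpha_kernel_pos_right alpha_kernel_0_right by (cases "y = 0") auto
  then show ?thesis
    unfolding jointly_superadditive_def using assms
    by (auto simp: ennreal_plus[symmetric] simp del: ennreal_plus
             intro!: ennreal_leI powr_mult_powr_superadditive)
qed

lemma jointly_subadditive_alpha_kernel:
  assumes "\<alpha> < 0 \<or> 1 < \<alpha>"
  shows "jointly_subadditive (alpha_kernel \<alpha>)"
proof -
  have gt1: "jointly_subadditive (alpha_kernel \<beta>)" if \<beta>: "1 < \<beta>" for \<beta>
    unfolding jointly_subadditive_def
  proof (intro allI impI)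
    fix x1 x2 y1 y2 :: real
    assume nn: "0 \<le> x1" "0 \<le> x2" "0 \<le> y1" "0 \<le> y2"
    consider "0 < x1 \<and> y1 = 0 \<or> 0 < x2 \<and> y2 = 0" | "x1 = 0" "y1 = 0" | "x2 = 0" "y2 = 0" | "0 < y1" "0 < y2"
      using nn by fastforce
    then show "alpha_kernel \<beta> (x1 + x2) (y1 + y2) \<le> alpha_kernel \<beta> x1 y1 + alpha_kernel \<beta> x2 y2"
    proof cases
      case 1 then show ?thesis using \<beta> by (auto simp: alpha_kernel_0_right)
    next
      case 2 then show ?thesis by simp
    next
      case 3 then show ?thesis by simp
    next
      case 4
      then show ?thesis using \<beta> nn powr_mult_powr_subadditive[of x1 x2 y1 y2 \<beta>]
        by (simp add: alpha_kernel_pos_right ennreal_plus[symmetric] del: ennreal_plus)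
    qed
  qed
  show ?thesis
    using assms
  proof
    assume "\<alpha> < 0"
    then have "1 < 1 - \<alpha>" by simp
    from jointly_subadditive_swap[OF gt1[OF this]] show ?thesis
      by (simp add: alpha_kernel_swap[symmetric])
  qed (rule gt1)
qed

definition kl_kernel :: "real \<Rightarrow> real \<Rightarrow> ennreal" where
  "kl_kernel x y = (if 0 < x then if 0 < y then ennreal (x * ln (x / y) - x + y) else \<infinity> else ennreal y)"

lemma diff_le_mult_ln_divide:
  fixes x y :: real
  assumes "0 < x" "0 < y"
  shows "x - y \<le> x * ln (x / y)"
proof -
  have "x * ln (y / x) \<le> x * (y / x - 1)"
    using assms by (intro mult_left_mono ln_le_minus_one) auto
  then show ?thesis using assms by (simp add: ln_div algebra_simps)
qed

lemma mult_ln_divide_antimono: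
  fixes x y y' :: real
  assumes "0 < x" "0 < y" "y \<le> y'"
  shows "x * ln (x / y') \<le> x * ln (x / y)"
  using assms by (intro mult_left_mono) (auto intro: divide_left_mono)

lemma pos_homogeneous_kl_kernel: "pos_homogeneous kl_kernel"
  unfolding pos_homogeneous_def kl_kernel_def
  by (auto simp: zero_less_mult_iff ennreal_mult'[symmetric] algebra_simps ennreal_mult_top)

lemma kl_kernel_0_0 [simp]: "kl_kernel 0 0 = 0"
  by (simp add: kl_kernel_def)

lemma jointly_subadditive_kl_kernel: "jointly_subadditive kl_kernel"
  unfolding jointly_subadditive_def
proof (intro allI impI)
  fix x1 x2 y1 y2 :: real
  assume nn: "0 \<le> x1" "0 \<le> x2" "0 \<le> y1" "0 \<le> y2"
  have nonneg: "0 \<le> x * ln (x / y) - x + y" if "0 < x" "0 < y" for x y :: real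
    using diff_le_mult_ln_divide[of x y] that by simp
  have shift: "x * ln (x / (y + y')) - x + (y + y') \<le> y' + (x * ln (x / y) - x + y)"
    if "0 < x" "0 < y" "0 \<le> y'" for x y y' :: real
    using mult_ln_divide_antimono[of x y "y + y'"] that by simp
  consider "0 < x1 \<and> y1 = 0 \<or> 0 < x2 \<and> y2 = 0" | "x1 = 0" "x2 = 0"
    | "x1 = 0" "0 < x2" "0 < y2" | "x2 = 0" "0 < x1" "0 < y1" | "0 < x1" "0 < x2" "0 < y1" "0 < y2"
    using nn by (smt (verit))
  then show "kl_kernel (x1 + x2) (y1 + y2) \<le> kl_kernel x1 y1 + kl_kernel x2 y2"
  proof cases
    case 1 then show ?thesis by (auto simp: kl_kernel_def)
  next
    case 2 then show ?thesis using nn by (simp add: kl_kernel_def ennreal_plus)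
  next
    case 3
    have "kl_kernel (x1 + x2) (y1 + y2) = ennreal (x2 * ln (x2 / (y1 + y2)) - x2 + (y1 + y2))"
      using 3 nn by (simp add: kl_kernel_def add_pos_nonneg)
    also have "\<dots> \<le> ennreal y1 + ennreal (x2 * ln (x2 / y2) - x2 + y2)"
      using nn nonneg[OF 3(2,3)] shift[OF 3(2,3) nn(3)] by (intro ennreal_le_add) (auto simp: add.commute)
    finally show ?thesis using 3 by (simp add: kl_kernel_def)
  next
    case 4
    have "kl_kernel (x1 + x2) (y1 + y2) = ennreal (x1 * ln (x1 / (y1 + y2)) - x1 + (y1 + y2))"
      using 4 nn by (simp add: kl_kernel_def add_pos_nonneg)
    also have "\<dots> \<le> ennreal (x1 * ln (x1 / y1) - x1 + y1) + ennreal y2"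
      using nn nonneg[OF 4(2,3)] shift[OF 4(2,3) nn(4)] by (intro ennreal_le_add) auto
    finally show ?thesis using 4 by (simp add: kl_kernel_def)
  next
    case 5 then show ?thesis using nonneg log_sum_inequality[OF 5]
      by (simp add: kl_kernel_def ennreal_le_add)
  qed
qed

lemma measurable_pow_e [measurable]:
  assumes [measurable]: "h \<in> borel_measurable M"
  shows "(\<lambda>t. pow_e (h t) a) \<in> borel_measurable M"
  unfolding pow_e_def by measurable

lemma measurable_alpha_kernel [measurable]:
  assumes [measurable]: "h \<in> borel_measurable M" "g \<in> borel_measurable M"
  shows "(\<lambda>t. alpha_kernel \<alpha> (h t) (g t)) \<in> borel_measurable M"
  unfolding alpha_kernel_def by measurable

lemma measurable_kl_pos [measurable]:
  assumes [measurable]: "h \<in> borel_measurable M" "g \<in> borel_measurable M"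
  shows "(\<lambda>t. kl_pos (h t) (g t)) \<in> borel_measurable M"
  unfolding kl_pos_def by measurable

lemma measurable_kl_neg [measurable]:
  assumes [measurable]: "h \<in> borel_measurable M" "g \<in> borel_measurable M"
  shows "(\<lambda>t. kl_neg (h t) (g t)) \<in> borel_measurable M"
  unfolding kl_neg_def by measurable

lemma measurable_kl_kernel [measurable]:
  assumes [measurable]: "h \<in> borel_measurable M" "g \<in> borel_measurable M"
  shows "(\<lambda>t. kl_kernel (h t) (g t)) \<in> borel_measurable M"
  unfolding kl_kernel_def by measurable

lemma measurable_skew_factor [measurable]:
  fixes prior lik :: "'a::euclidean_space \<Rightarrow> real"
  assumes [measurable]: "prior \<in> borel_measurable borel" "lik \<in> borel_measurable borel"
  shows "skew_factor prior lik th \<in> borel_measurable borel"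
  unfolding skew_factor_def[abs_def] Let_def by measurable

lemma measurable_skew_density [measurable]:
  assumes [measurable]: "f \<in> borel_measurable M" "w \<in> borel_measurable M"
  shows "skew_density f w \<in> borel_measurable M"
  unfolding skew_density_def[abs_def] by measurable

lemma measurable_posterior [measurable]:
  assumes [measurable]: "prior \<in> borel_measurable M" "lik \<in> borel_measurable M"
  shows "posterior prior lik S \<in> borel_measurable M"
  unfolding posterior_def[abs_def] by measurable

definition skewing_weight :: "'a::real_vector \<Rightarrow> 'a set \<Rightarrow> ('a \<Rightarrow> real) \<Rightarrow> bool" where
  "skewing_weight th S w \<longleftrightarrow> (\<forall>t\<in>S. 0 \<le> w t \<and> w t \<le> 1 \<and> w (refl_pt th t) = 1 - w t)"

lemma skewing_weight_split_ratio:
  assumes "sym_about th S" and "\<forall>t\<in>S. 0 \<le> p t"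
    and "\<forall>t\<in>S. w t = split_ratio (p t) (p (refl_pt th t))"
  shows "skewing_weight th S w"
  using assms split_ratio_bounds split_ratio_swap
  unfolding skewing_weight_def sym_about_def by (metis refl_pt_refl_pt)

lemma nn_integral_skew_density:
  fixes f w :: "'a::euclidean_space \<Rightarrow> real"
  assumes [measurable]: "f \<in> borel_measurable borel" "w \<in> borel_measurable borel" "S \<in> sets borel"
    and S: "sym_about th S" and f_nonneg: "\<forall>t\<in>S. 0 \<le> f t"
    and f_sym: "\<forall>t\<in>S. f t = f (refl_pt th t)" and w: "skewing_weight th S w"
  shows "(\<integral>\<^sup>+t. ennreal (skew_density f w t) * indicator S t \<partial>lborel)
       = (\<integral>\<^sup>+t. ennreal (f t) * indicator S t \<partial>lborel)"
proof -
  let ?Q = "\<lambda>t. ennreal (skew_density f w t) * indicator S t"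
  have pair: "?Q t + ?Q (refl_pt th t) = 2 * (ennreal (f t) * indicator S t)" for t
  proof (cases "t \<in> S")
    case True
    have nonneg: "0 \<le> f t" "0 \<le> w t" "w t \<le> 1"
      using f_nonneg w True by (auto simp: skewing_weight_def)
    have "refl_pt th t \<in> S" "f (refl_pt th t) = f t" "w (refl_pt th t) = 1 - w t"
      using S f_sym[rule_format, OF True] w True by (auto simp: skewing_weight_def sym_about_def)
    then have "?Q t + ?Q (refl_pt th t) = ennreal (2 * f t * w t) + ennreal (2 * f t * (1 - w t))"
      using True by (simp add: skew_density_def)
    also have "\<dots> = ennreal (2 * f t)"
      using nonneg by (subst ennreal_plus[symmetric]) (auto simp: algebra_simps mult_left_le)
    also have "\<dots> = 2 * (ennreal (f t) * indicator S t)"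
      using True nonneg by (simp add: ennreal_mult)
    finally show ?thesis .
  qed (simp add: indicator_refl_pt[OF S])
  have "2 * (\<integral>\<^sup>+t. ?Q t \<partial>lborel) = (\<integral>\<^sup>+t. ?Q t + ?Q (refl_pt th t) \<partial>lborel)"
    by (rule nn_integral_add_refl_pt[symmetric]) measurable
  also have "\<dots> = (\<integral>\<^sup>+t. 2 * (ennreal (f t) * indicator S t) \<partial>lborel)"
    by (simp only: pair)
  also have "\<dots> = 2 * (\<integral>\<^sup>+t. ennreal (f t) * indicator S t \<partial>lborel)"
    by (rule nn_integral_cmult) measurable
  finally show ?thesis
    by (simp add: ennreal_mult_cancel_left)
qed

definition prob_density :: "'a::euclidean_space set \<Rightarrow> ('a \<Rightarrow> real) \<Rightarrow> bool" where
  "prob_density S u \<longleftrightarrow> u \<in> borel_measurable borel \<and> (\<forall>t\<in>S. 0 \<le> u t)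
     \<and> (\<integral>\<^sup>+t. ennreal (u t) * indicator S t \<partial>lborel) = 1"

lemma prob_density_skew_density:
  assumes "S \<in> sets borel" "sym_about th S" "prob_density S f" "\<forall>t\<in>S. f t = f (refl_pt th t)"
    and "skewing_weight th S w" "w \<in> borel_measurable borel"
  shows "prob_density S (skew_density f w)"
  using assms nn_integral_skew_density[of f w S th]
  by (auto simp: prob_density_def skewing_weight_def skew_density_def)

lemma nn_integral_skew_density_mono:
  fixes F :: "real \<Rightarrow> real \<Rightarrow> ennreal" and p f w1 w2 :: "'a::euclidean_space \<Rightarrow> real"
  assumes S: "sym_about th S" and f_sym: "\<forall>t\<in>S. f t = f (refl_pt th t)"
    and w1: "skewing_weight th S w1" and w2: "skewing_weight th S w2"
    and meas: "(\<lambda>t. F (p t) (skew_density f w1 t) * indicator S t) \<in> borel_measurable borel"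
      "(\<lambda>t. F (p t) (skew_density f w2 t) * indicator S t) \<in> borel_measurable borel"
    and pairs: "\<And>t. t \<in> S \<Longrightarrow>
        F (p t) (2 * f t * w1 t) + F (p (refl_pt th t)) (2 * f t * (1 - w1 t))
      \<le> F (p t) (2 * f t * w2 t) + F (p (refl_pt th t)) (2 * f t * (1 - w2 t))"
  shows "(\<integral>\<^sup>+t. F (p t) (skew_density f w1 t) * indicator S t \<partial>lborel)
       \<le> (\<integral>\<^sup>+t. F (p t) (skew_density f w2 t) * indicator S t \<partial>lborel)"
proof (rule nn_integral_mono_refl_pt_pairs[where th = th, OF meas])
  fix t
  show "F (p t) (skew_density f w1 t) * indicator S t
        + F (p (refl_pt th t)) (skew_density f w1 (refl_pt th t)) * indicator S (refl_pt th t)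
      \<le> F (p t) (skew_density f w2 t) * indicator S t
        + F (p (refl_pt th t)) (skew_density f w2 (refl_pt th t)) * indicator S (refl_pt th t)"
  proof (cases "t \<in> S")
    case True
    have "refl_pt th t \<in> S" "f (refl_pt th t) = f t"
      "w1 (refl_pt th t) = 1 - w1 t" "w2 (refl_pt th t) = 1 - w2 t"
      using S f_sym[rule_format, OF True] w1 w2 True by (auto simp: skewing_weight_def sym_about_def)
    then show ?thesis
      using pairs[OF True] True by (simp add: skew_density_def)
  qed (simp add: indicator_refl_pt[OF S])
qed

lemma nn_integral_skew_density_split_ratio_le:
  fixes F :: "real \<Rightarrow> real \<Rightarrow> ennreal" and p f w1 w2 :: "'a::euclidean_space \<Rightarrow> real"
  assumes S: "sym_about th S" and p: "\<forall>t\<in>S. 0 \<le> p t"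
    and f_nonneg: "\<forall>t\<in>S. 0 \<le> f t" and f_sym: "\<forall>t\<in>S. f t = f (refl_pt th t)"
    and w1: "\<forall>t\<in>S. w1 t = split_ratio (p t) (p (refl_pt th t))" and w2: "skewing_weight th S w2"
    and F: "pos_homogeneous F" "F 0 0 = 0" "jointly_subadditive F"
    and meas: "(\<lambda>t. F (p t) (skew_density f w1 t) * indicator S t) \<in> borel_measurable borel"
      "(\<lambda>t. F (p t) (skew_density f w2 t) * indicator S t) \<in> borel_measurable borel"
  shows "(\<integral>\<^sup>+t. F (p t) (skew_density f w1 t) * indicator S t \<partial>lborel)
       \<le> (\<integral>\<^sup>+t. F (p t) (skew_density f w2 t) * indicator S t \<partial>lborel)"
proof (rule nn_integral_skew_density_mono[OF S f_sym skewing_weight_split_ratio[OF S p w1] w2 meas])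
  fix t assume "t \<in> S"
  then have "w1 t = split_ratio (p t) (p (refl_pt th t))" "0 \<le> p t" "0 \<le> p (refl_pt th t)"
    "0 \<le> 2 * f t" "0 \<le> w2 t" "w2 t \<le> 1"
    using S p f_nonneg w1 w2 by (auto simp: sym_about_def skewing_weight_def)
  then show "F (p t) (2 * f t * w1 t) + F (p (refl_pt th t)) (2 * f t * (1 - w1 t))
      \<le> F (p t) (2 * f t * w2 t) + F (p (refl_pt th t)) (2 * f t * (1 - w2 t))"
    using split_ratio_minimizes[OF F] by simp
qed

lemma nn_integral_skew_density_split_ratio_ge:
  fixes F :: "real \<Rightarrow> real \<Rightarrow> ennreal" and p f w1 w2 :: "'a::euclidean_space \<Rightarrow> real"
  assumes S: "sym_about th S" and p: "\<forall>t\<in>S. 0 \<le> p t"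
    and f_nonneg: "\<forall>t\<in>S. 0 \<le> f t" and f_sym: "\<forall>t\<in>S. f t = f (refl_pt th t)"
    and w1: "\<forall>t\<in>S. w1 t = split_ratio (p t) (p (refl_pt th t))" and w2: "skewing_weight th S w2"
    and F: "pos_homogeneous F" "F 0 0 = 0" "jointly_superadditive F"
    and meas: "(\<lambda>t. F (p t) (skew_density f w1 t) * indicator S t) \<in> borel_measurable borel"
      "(\<lambda>t. F (p t) (skew_density f w2 t) * indicator S t) \<in> borel_measurable borel"
  shows "(\<integral>\<^sup>+t. F (p t) (skew_density f w2 t) * indicator S t \<partial>lborel)
       \<le> (\<integral>\<^sup>+t. F (p t) (skew_density f w1 t) * indicator S t \<partial>lborel)"
proof (rule nn_integral_skew_density_mono[OF S f_sym w2 skewing_weight_split_ratio[OF S p w1] meas(2,1)])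
  fix t assume "t \<in> S"
  then have "w1 t = split_ratio (p t) (p (refl_pt th t))" "0 \<le> p t" "0 \<le> p (refl_pt th t)"
    "0 \<le> 2 * f t" "0 \<le> w2 t" "w2 t \<le> 1"
    using S p f_nonneg w1 w2 by (auto simp: sym_about_def skewing_weight_def)
  then show "F (p t) (2 * f t * w2 t) + F (p (refl_pt th t)) (2 * f t * (1 - w2 t))
      \<le> F (p t) (2 * f t * w1 t) + F (p (refl_pt th t)) (2 * f t * (1 - w1 t))"
    using split_ratio_maximizes[OF F] by simp
qed

lemma kl_pos_add_eq:
  fixes x y :: real
  assumes "0 \<le> x" "0 \<le> y"
  shows "kl_pos x y + ennreal y = kl_neg x y + ennreal x + kl_kernel x y"
proof (cases "0 < x \<and> 0 < y")
  case True
  define L where "L = x * ln (x / y)"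
  have "x - y \<le> L" using diff_le_mult_ln_divide True by (simp add: L_def)
  then show ?thesis
    using True by (cases "0 \<le> L")
      (simp_all add: kl_pos_def kl_neg_def kl_kernel_def L_def[symmetric] ennreal_neg
         ennreal_plus[symmetric] del: ennreal_plus)
qed (use assms in \<open>auto simp: kl_pos_def kl_neg_def kl_kernel_def\<close>)

lemma kl_neg_le: "0 \<le> y \<Longrightarrow> kl_neg x y \<le> ennreal y"
  using diff_le_mult_ln_divide[of x y] by (auto simp: kl_neg_def intro: ennreal_leI)

lemma KL_div_eq_kl_kernel:
  assumes [measurable]: "S \<in> sets borel" and u: "prob_density S u" and v: "prob_density S v"
  shows "KL_div S u v = enn2ereal (\<integral>\<^sup>+t. kl_kernel (u t) (v t) * indicator S t \<partial>lborel)"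
proof -
  have [measurable]: "u \<in> borel_measurable borel" "v \<in> borel_measurable borel"
    and nonneg: "\<forall>t\<in>S. 0 \<le> u t \<and> 0 \<le> v t"
    and u_mass: "(\<integral>\<^sup>+t. ennreal (u t) * indicator S t \<partial>lborel) = 1"
    and v_mass: "(\<integral>\<^sup>+t. ennreal (v t) * indicator S t \<partial>lborel) = 1"
    using u v by (auto simp: prob_density_def)
  define P N K where "P = (\<integral>\<^sup>+t. kl_pos (u t) (v t) * indicator S t \<partial>lborel)"
    and "N = (\<integral>\<^sup>+t. kl_neg (u t) (v t) * indicator S t \<partial>lborel)"
    and "K = (\<integral>\<^sup>+t. kl_kernel (u t) (v t) * indicator S t \<partial>lborel)"
  have "P + 1 = (\<integral>\<^sup>+t. kl_pos (u t) (v t) * indicator S t + ennreal (v t) * indicator S t \<partial>lborel)"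
    unfolding P_def v_mass[symmetric] by (subst nn_integral_add) auto
  also have "\<dots> = (\<integral>\<^sup>+t. kl_neg (u t) (v t) * indicator S t + ennreal (u t) * indicator S t
                          + kl_kernel (u t) (v t) * indicator S t \<partial>lborel)"
    using nonneg kl_pos_add_eq by (intro nn_integral_cong) (auto simp: indicator_def)
  also have "\<dots> = (N + K) + 1"
    unfolding N_def K_def u_mass[symmetric] by (simp add: nn_integral_add ac_simps)
  finally have "P = N + K" by simp
  moreover have "N \<le> 1"
    unfolding N_def v_mass[symmetric] using nonneg kl_neg_le
    by (intro nn_integral_mono) (auto simp: indicator_def)
  then have "N \<noteq> \<infinity>"
    by (auto simp: top_unique)
  ultimately have "enn2ereal P - enn2ereal N = enn2ereal K"
    by (metis enn2ereal_eq_top_iff enn2ereal_nonneg ereal_add_cancel_left ereal_ineq_diff_add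
        ereal_le_add_self infinity_ennreal_def not_MInfty_nonneg plus_ennreal.rep_eq)
  then show ?thesis unfolding KL_div_def P_def N_def K_def .
qed

lemma alpha_div_mono:
  assumes "\<alpha> < 0 \<or> 1 < \<alpha>"
    and "(\<integral>\<^sup>+t. alpha_kernel \<alpha> (p t) (q1 t) * indicator S t \<partial>lborel)
       \<le> (\<integral>\<^sup>+t. alpha_kernel \<alpha> (p t) (q2 t) * indicator S t \<partial>lborel)"
  shows "alpha_div \<alpha> S p q1 \<le> alpha_div \<alpha> S p q2"
proof -
  have "1 / (\<alpha> * (1 - \<alpha>)) < 0"
    using assms(1) by (auto simp: divide_less_0_iff mult_neg_pos mult_pos_neg)
  then show ?thesis
    using assms(2) ereal_minus_mono ereal_mult_le_mult_iff less_eq_ennreal.rep_eq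
    unfolding alpha_div_def alpha_kernel_def by auto
qed

lemma alpha_div_antimono:
  assumes "0 < \<alpha>" "\<alpha> < 1"
    and "(\<integral>\<^sup>+t. alpha_kernel \<alpha> (p t) (q2 t) * indicator S t \<partial>lborel)
       \<le> (\<integral>\<^sup>+t. alpha_kernel \<alpha> (p t) (q1 t) * indicator S t \<partial>lborel)"
  shows "alpha_div \<alpha> S p q1 \<le> alpha_div \<alpha> S p q2"
  using assms unfolding alpha_div_def alpha_kernel_def
  by (simp add: ereal_minus_mono ereal_mult_left_mono less_eq_ennreal.rep_eq)

lemma post_norm_pos:
  assumes "(\<integral>\<^sup>+t. ennreal (prior t * lik t) * indicator S t \<partial>lborel) \<noteq> 0"
    and "(\<integral>\<^sup>+t. ennreal (prior t * lik t) * indicator S t \<partial>lborel) \<noteq> \<infinity>"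
  shows "0 < post_norm prior lik S"
  using assms by (simp add: post_norm_def enn2real_positive_iff less_top[symmetric] zero_less_iff_neq_zero)

lemma prob_density_posterior:
  fixes prior lik :: "'a::euclidean_space \<Rightarrow> real"
  assumes [measurable]: "prior \<in> borel_measurable borel" "lik \<in> borel_measurable borel" "S \<in> sets borel"
    and nonneg: "\<forall>t\<in>S. 0 \<le> prior t * lik t"
    and norm_pos: "(\<integral>\<^sup>+t. ennreal (prior t * lik t) * indicator S t \<partial>lborel) \<noteq> 0"
    and norm_fin: "(\<integral>\<^sup>+t. ennreal (prior t * lik t) * indicator S t \<partial>lborel) \<noteq> \<infinity>"
  shows "prob_density S (posterior prior lik S)"
proof -
  define N where "N = post_norm prior lik S"
  have N: "0 < N" using post_norm_pos[OF norm_pos norm_fin] by (simp add: N_def)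
  have "(\<integral>\<^sup>+t. ennreal (posterior prior lik S t) * indicator S t \<partial>lborel)
      = (\<integral>\<^sup>+t. ennreal (prior t * lik t) * indicator S t * ennreal (1 / N) \<partial>lborel)"
    using nonneg N
    by (intro nn_integral_cong)
      (auto simp: posterior_def N_def[symmetric] indicator_def ennreal_mult[symmetric])
  also have "\<dots> = ennreal N * ennreal (1 / N)"
    using norm_fin by (simp add: nn_integral_multc N_def post_norm_def ennreal_enn2real_if)
  also have "\<dots> = 1"
    using N by (simp add: ennreal_mult[symmetric])
  finally show ?thesis
    using nonneg N by (simp add: prob_density_def posterior_def N_def[symmetric])
qed

lemma skew_factor_posterior:
  assumes "0 < post_norm prior lik S"
  shows "skew_factor prior lik th t
       = split_ratio (posterior prior lik S t) (posterior prior lik S (refl_pt th t))"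
  using assms by (simp add: skew_factor_split_ratio posterior_def split_ratio_divide)

locale symmetric_skewing =
  fixes S :: "'a::euclidean_space set" and th :: 'a and p f w_opt w :: "'a \<Rightarrow> real"
  assumes S_meas [measurable]: "S \<in> sets borel" and S_sym: "sym_about th S"
    and p: "prob_density S p" and f: "prob_density S f"
    and f_sym: "\<forall>t\<in>S. f t = f (refl_pt th t)"
    and w_opt: "\<forall>t\<in>S. w_opt t = split_ratio (p t) (p (refl_pt th t))"
    and w: "skewing_weight th S w"
    and w_opt_meas [measurable]: "w_opt \<in> borel_measurable borel"
    and w_meas [measurable]: "w \<in> borel_measurable borel"
begin

lemma p_meas [measurable]: "p \<in> borel_measurable borel"
  and f_meas [measurable]: "f \<in> borel_measurable borel"
  and p_nonneg: "\<forall>t\<in>S. 0 \<le> p t"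
  and f_nonneg: "\<forall>t\<in>S. 0 \<le> f t"
  using p f by (simp_all add: prob_density_def)

lemma prob_density_skewed: "prob_density S (skew_density f w_opt)" "prob_density S (skew_density f w)"
  using skewing_weight_split_ratio[OF S_sym p_nonneg w_opt] w
  by (auto intro!: prob_density_skew_density[OF S_meas S_sym f f_sym])

lemmas skew_le = nn_integral_skew_density_split_ratio_le[OF S_sym p_nonneg f_nonneg f_sym w_opt w]
lemmas skew_ge = nn_integral_skew_density_split_ratio_ge[OF S_sym p_nonneg f_nonneg f_sym w_opt w]

lemma TV_div_le: "TV_div S p (skew_density f w_opt) \<le> TV_div S p (skew_density f w)"
  unfolding TV_div_def
  by (intro mult_left_mono skew_le[where F = "\<lambda>x y. ennreal \<bar>x - y\<bar>"]
      pos_homogeneous_abs_diff jointly_subadditive_abs_diff; (measurable | simp))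

lemma alpha_div_le:
  assumes "\<alpha> \<noteq> 0" "\<alpha> \<noteq> 1"
  shows "alpha_div \<alpha> S p (skew_density f w_opt) \<le> alpha_div \<alpha> S p (skew_density f w)"
proof -
  consider "\<alpha> < 0 \<or> 1 < \<alpha>" | "0 < \<alpha>" "\<alpha> < 1"
    using assms by fastforce
  then show ?thesis
  proof cases
    case 1
    show ?thesis
      by (intro alpha_div_mono[OF 1] skew_le[where F = "alpha_kernel \<alpha>"]
          pos_homogeneous_alpha_kernel jointly_subadditive_alpha_kernel[OF 1]; (measurable | simp))
  next
    case 2
    show ?thesis
      by (intro alpha_div_antimono[OF 2] skew_ge[where F = "alpha_kernel \<alpha>"]
          pos_homogeneous_alpha_kernel jointly_superadditive_alpha_kernel[OF 2]; (measurable | simp))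
  qed
qed

lemma KL_div_le: "KL_div S p (skew_density f w_opt) \<le> KL_div S p (skew_density f w)"
proof -
  have "(\<integral>\<^sup>+t. kl_kernel (p t) (skew_density f w_opt t) * indicator S t \<partial>lborel)
      \<le> (\<integral>\<^sup>+t. kl_kernel (p t) (skew_density f w t) * indicator S t \<partial>lborel)"
    by (intro skew_le[where F = kl_kernel] pos_homogeneous_kl_kernel jointly_subadditive_kl_kernel;
        (measurable | simp))
  then show ?thesis
    by (simp only: KL_div_eq_kl_kernel[OF S_meas p prob_density_skewed(1)]
        KL_div_eq_kl_kernel[OF S_meas p prob_density_skewed(2)] less_eq_ennreal.rep_eq[symmetric])
qed

lemma KL_div_reverse_le: "KL_div S (skew_density f w_opt) p \<le> KL_div S (skew_density f w) p"
proof -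
  have "(\<integral>\<^sup>+t. kl_kernel (skew_density f w_opt t) (p t) * indicator S t \<partial>lborel)
      \<le> (\<integral>\<^sup>+t. kl_kernel (skew_density f w t) (p t) * indicator S t \<partial>lborel)"
    using pos_homogeneous_swap[OF pos_homogeneous_kl_kernel]
      jointly_subadditive_swap[OF jointly_subadditive_kl_kernel]
    by (intro skew_le[where F = "\<lambda>x y. kl_kernel y x"]; (measurable | simp))
  then show ?thesis
    by (simp only: KL_div_eq_kl_kernel[OF S_meas prob_density_skewed(1) p]
        KL_div_eq_kl_kernel[OF S_meas prob_density_skewed(2) p] less_eq_ennreal.rep_eq[symmetric])
qed

end

theorem theorem2:
  fixes \<Theta> :: "'a::euclidean_space set" and th :: 'a
    and prior lik f w :: "'a \<Rightarrow> real"
  assumes Theta_meas: "\<Theta> \<in> sets lborel"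
    and th_in: "th \<in> \<Theta>"
    and Theta_sym: "sym_about th \<Theta>"
    and prior_meas: "prior \<in> borel_measurable lborel"
    and lik_meas: "lik \<in> borel_measurable lborel"
    and prior_nonneg: "\<forall>t\<in>\<Theta>. prior t \<ge> 0"
    and lik_nonneg: "\<forall>t\<in>\<Theta>. lik t \<ge> 0"
    and norm_pos: "(\<integral>\<^sup>+ t. ennreal (prior t * lik t) * indicator \<Theta> t \<partial>lborel) \<noteq> 0"
    and norm_fin: "(\<integral>\<^sup>+ t. ennreal (prior t * lik t) * indicator \<Theta> t \<partial>lborel) \<noteq> \<infinity>"
    and f_meas: "f \<in> borel_measurable lborel"
    and f_nonneg: "\<forall>t\<in>\<Theta>. f t \<ge> 0"
    and f_dens: "(\<integral>\<^sup>+ t. ennreal (f t) * indicator \<Theta> t \<partial>lborel) = 1"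
    and f_sym: "\<forall>t\<in>\<Theta>. f t = f (refl_pt th t)"
    and w_meas: "w \<in> borel_measurable lborel"
    and w_range: "\<forall>t\<in>\<Theta>. 0 \<le> w t \<and> w t \<le> 1"
    and w_anti: "\<forall>t\<in>\<Theta>. w t = 1 - w (refl_pt th t)"
  shows "TV_div \<Theta> (posterior prior lik \<Theta>) (skew_density f (skew_factor prior lik th))
           \<le> TV_div \<Theta> (posterior prior lik \<Theta>) (skew_density f w)
       \<and> (\<forall>\<alpha>::real. \<alpha> \<noteq> 0 \<and> \<alpha> \<noteq> 1 \<longrightarrow>
            alpha_div \<alpha> \<Theta> (posterior prior lik \<Theta>) (skew_density f (skew_factor prior lik th))
              \<le> alpha_div \<alpha> \<Theta> (posterior prior lik \<Theta>) (skew_density f w))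
       \<and> KL_div \<Theta> (posterior prior lik \<Theta>) (skew_density f (skew_factor prior lik th))
           \<le> KL_div \<Theta> (posterior prior lik \<Theta>) (skew_density f w)
       \<and> KL_div \<Theta> (skew_density f (skew_factor prior lik th)) (posterior prior lik \<Theta>)
           \<le> KL_div \<Theta> (skew_density f w) (posterior prior lik \<Theta>)"
proof -
  have [measurable]: "prior \<in> borel_measurable borel" "lik \<in> borel_measurable borel"
    "f \<in> borel_measurable borel" "w \<in> borel_measurable borel" "\<Theta> \<in> sets borel"
    using prior_meas lik_meas f_meas w_meas Theta_meas by auto
  define p where "p = posterior prior lik \<Theta>"
  have p: "prob_density \<Theta> p"
    unfolding p_def using prior_nonneg lik_nonneg
    by (intro prob_density_posterior norm_pos norm_fin) auto
  have "\<forall>t\<in>\<Theta>. skew_factor prior lik th t = split_ratio (p t) (p (refl_pt th t))"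
    using skew_factor_posterior[OF post_norm_pos[OF norm_pos norm_fin]] by (simp add: p_def)
  moreover have "prob_density \<Theta> f"
    using f_nonneg f_dens \<open>f \<in> borel_measurable borel\<close> by (simp add: prob_density_def)
  moreover have "skewing_weight th \<Theta> w"
    using w_range w_anti by (auto simp: skewing_weight_def)
  ultimately interpret symmetric_skewing \<Theta> th p f "skew_factor prior lik th" w
    using Theta_sym f_sym p by unfold_locales auto
  show ?thesis
    using TV_div_le alpha_div_le KL_div_le KL_div_reverse_le by (simp add: p_def)
qed

end
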